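(* Let $A=A^\top\in\mathbb{R}^{3\times3}$ be positive definite, $u\in\mathbb{S}^2$, and $\gamma>0$. Let $\mathcal{T}(R,\theta)=R\,\mathcal{R}_a(\theta,u)$ and $$U(R,\theta)=\mathrm{tr}\big(A(I_3-\mathcal{T}(R,\theta))\big)+\tfrac{\gamma}{2}\theta^2 .$$ Consider trajectories generated by $\dot R=R\omega^\times$ and $\dot\theta=v$ with $R(0)\in SO(3)$, $\theta(0)\in\mathbb{R}$, $\omega\in\mathbb{R}^3$, $v\in\mathbb{R}$. Then for all $(R,\theta)\in SO(3)\times\mathbb{R}$: 1. $\dot{\mathcal{T}}(R,\theta)=\mathcal{T}(R,\theta)\big(\mathcal{R}_a(\theta,u)^\top\omega+vu\big)^\times$; 2. $\psi(R^\top\nabla_RU(R,\theta))=\mathcal{R}_a(\theta,u)\,\psi(A\mathcal{T}(R,\theta))$; 3. $\nabla_\theta U(R,\theta)=\gamma\theta+2u^\top\psi(A\mathcal{T}(R,\theta))$; 4. the critical set of $U$ is $\Psi_U=\Psi_V\times\{0\}$, and in particular $(I_3,0)\in\Psi_U$; 5. $\tfrac{d}{dt}\psi(R^\top\nabla_RU(R,\theta))=\mathcal{D}_R(R,\theta)\,\omega+\mathcal{D}_\theta(R,\theta)\,v$, where $$\mathcal{D}_R(R,\theta)=\mathcal{R}_a(\theta,u)\,E(A\mathcal{T}(R,\theta))\,\mathcal{R}_a(\theta,u)^\top,$$ $$\mathcal{D}_\theta(R,\theta)=\mathcal{R}_a(\theta,u)\,E(A\mathcal{T}(R,\theta))\,u-\big(\mathcal{R}_a(\theta,u)\,\psi(A\mathcal{T}(R,\theta))\big)^\times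 u,$$ and $E(B)=\tfrac12(\mathrm{tr}(B)I_3-B^\top)$ for $B\in\mathbb{R}^{3\times3}$.
   Context: Notation. - $\mathcal{R}_a(\theta,u)=I_3+\sin\theta\,u^\times+(1-\cos\theta)(u^\times)^2$ is the rotation by angle $\theta$ about the unit axis $u$. - $x^\times$ is the skew-symmetric matrix with $x^\times y=x\times y$. - For $B=[b_{ij}]$, $\psi(B)=\tfrac12[b_{32}-b_{23},b_{13}-b_{31},b_{21}-b_{12}]^\top$. - $\nabla_RU(R,\theta)\in T_RSO(3)=\{R\Omega:\Omega^\top=-\Omega\}$ is the gradient in $R$ with respect to the metric $\langle R\Omega_1,R\Omega_2\rangle_R=\mathrm{tr}(\Omega_1^\top\Omega_2)$, and $\nabla_\theta U$ is the partial derivative in $\theta$. - The critical set is $\Psi_U=\{(R,\theta):\nabla_RU(R,\theta)=0,\ \nabla_\theta U(R,\theta)=0\}$. - $\Psi_V=\{I_3\}\cup\{\mathcal{R}_a(\pi,w):w\in\mathcal{E}(A)\}$, where $\mathcal{E}(A)$ is the set of all unit eigenvectors of $A$. *)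

theory Defs
  imports "HOL-Analysis.Analysis"
begin

type_synonym mat3 = "real^3^3"
type_synonym vec3 = "real^3"

text \<open>Skew-symmetric matrix: skew x *v y = x \<times> y.\<close>
definition skew :: "vec3 \<Rightarrow> mat3" where
  "skew x = vector [vector [0, - x$3, x$2],
                    vector [x$3, 0, - x$1],
                    vector [- x$2, x$1, 0]]"

definition is_skew :: "mat3 \<Rightarrow> bool" where
  "is_skew \<Omega> \<longleftrightarrow> transpose \<Omega> = - \<Omega>"

text \<open>Rotation by angle th about the unit axis u (Rodrigues formula).\<close>
definition Ra :: "real \<Rightarrow> vec3 \<Rightarrow> mat3" where
  "Ra th u = mat 1 + sin th *\<^sub>R skew u + (1 - cos th) *\<^sub>R (skew u ** skew u)"

definition psi :: "mat3 \<Rightarrow> vec3" where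
  "psi B = (1/2) *\<^sub>R vector [B$3$2 - B$2$3, B$1$3 - B$3$1, B$2$1 - B$1$2]"

definition SO3 :: "mat3 set" where
  "SO3 = {R. transpose R ** R = mat 1 \<and> det R = 1}"

definition frob :: "mat3 \<Rightarrow> mat3 \<Rightarrow> real" where
  "frob X Y = trace (transpose X ** Y)"

text \<open>Riemannian gradient on SO(3) w.r.t. the metric <R O1, R O2>_R = tr(O1^T O2):
  the unique tangent vector G = R O_G (O_G skew) such that, for every tangent direction
  R O, the directional derivative of f at R along R O equals <G, R O>_R.\<close>
definition gradR :: "(mat3 \<Rightarrow> real) \<Rightarrow> mat3 \<Rightarrow> mat3" where
  "gradR f R = (THE G. (\<exists>\<Omega>G. is_skew \<Omega>G \<and> G = R ** \<Omega>G) \<and>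
      (\<forall>\<Omega>. is_skew \<Omega> \<longrightarrow>
         ((\<lambda>s. f (R + s *\<^sub>R (R ** \<Omega>))) has_real_derivative
            frob (transpose R ** G) \<Omega>) (at 0)))"

definition Tmap :: "vec3 \<Rightarrow> mat3 \<Rightarrow> real \<Rightarrow> mat3" where
  "Tmap u R th = R ** Ra th u"

definition Upot :: "mat3 \<Rightarrow> real \<Rightarrow> vec3 \<Rightarrow> mat3 \<Rightarrow> real \<Rightarrow> real" where
  "Upot A \<gamma> u R th = trace (A ** (mat 1 - Tmap u R th)) + \<gamma> / 2 * th\<^sup>2"

definition gradTheta :: "mat3 \<Rightarrow> real \<Rightarrow> vec3 \<Rightarrow> mat3 \<Rightarrow> real \<Rightarrow> real" where
  "gradTheta A \<gamma> u R th = deriv (\<lambda>t. Upot A \<gamma> u R t) th"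

definition critU :: "mat3 \<Rightarrow> real \<Rightarrow> vec3 \<Rightarrow> (mat3 \<times> real) set" where
  "critU A \<gamma> u = {(R, th). R \<in> SO3 \<and> gradR (\<lambda>X. Upot A \<gamma> u X th) R = 0
                              \<and> gradTheta A \<gamma> u R th = 0}"

definition unit_eigvecs :: "mat3 \<Rightarrow> vec3 set" where
  "unit_eigvecs A = {w. norm w = 1 \<and> (\<exists>c. A *v w = c *\<^sub>R w)}"

definition critV :: "mat3 \<Rightarrow> mat3 set" where
  "critV A = {mat 1} \<union> {Ra pi w | w. w \<in> unit_eigvecs A}"

definition Emat :: "mat3 \<Rightarrow> mat3" where
  "Emat B = (1/2) *\<^sub>R (trace B *\<^sub>R mat 1 - transpose B)"

definition DR :: "mat3 \<Rightarrow> vec3 \<Rightarrow> mat3 \<Rightarrow> real \<Rightarrow> mat3" where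
  "DR A u R th = Ra th u ** Emat (A ** Tmap u R th) ** transpose (Ra th u)"

definition Dtheta :: "mat3 \<Rightarrow> vec3 \<Rightarrow> mat3 \<Rightarrow> real \<Rightarrow> vec3" where
  "Dtheta A u R th = Ra th u ** Emat (A ** Tmap u R th) *v u
      - skew (Ra th u *v psi (A ** Tmap u R th)) *v u"

end

theory Submission
  imports Defs "HOL-Analysis.Cross3"
begin

(* The potential is affine in R: along R + s R w^x its derivative is -tr(Ra A R w^x), that is
   2 psi(Ra A R) . w.  As psi commutes with conjugation by rotations, the gradient in R is
   R (Ra psi(A T))^x, and the gradient in theta is gamma theta + 2 u . psi(A T).

   At a critical point gamma theta = 0 forces theta = 0 and psi(A R) = 0.  Split R = S + k^x into
   its symmetric and skew parts; they commute because R is normal, so tr(A S k^x) = 0 and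
   0 = k . psi(A R) = k . E(A) k.  Since E(A) is positive definite along with A, k = 0 and R is a
   symmetric rotation: either I or a half-turn Ra(pi, w), and a half-turn commutes with A exactly
   when its axis w is an eigenvector of A.

   The time derivatives follow from the product rule and Ra' = Ra u^x, once one knows that
   trajectories stay orthogonal; this holds because |R^T R - I|^2 has derivative zero. *)

unbundle no cross3_syntax
unbundle set_product_syntax

section \<open>Matrix calculus\<close>

lemma matrix_mult_add_rdistrib: "(A + B) ** C = A ** C + B ** (C :: 'a::semiring_1^'p^'n)"
  by (vector matrix_matrix_mult_def sum.distrib[symmetric] field_simps)

interpretation matrix_mult: bounded_bilinear "(**) :: real^'n^'m \<Rightarrow> real^'p^'n \<Rightarrow> real^'p^'m"
  unfolding bilinear_conv_bounded_bilinear[symmetric] bilinear_def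
  by (auto intro!: linearI simp: matrix_add_ldistrib matrix_mult_add_rdistrib matrix_scalar_ac
      scalar_matrix_assoc[symmetric])

interpretation matrix_vector_mult: bounded_bilinear "(*v) :: real^'n^'m \<Rightarrow> real^'n \<Rightarrow> real^'m"
  unfolding bilinear_conv_bounded_bilinear[symmetric] bilinear_def
  by (auto intro!: linearI simp: matrix_vector_right_distrib matrix_vector_mult_add_rdistrib
      matrix_vector_mult_scaleR scaleR_matrix_vector_assoc)

lemma bounded_linear_transpose: "bounded_linear (transpose :: real^'n^'m \<Rightarrow> real^'m^'n)"
  unfolding linear_conv_bounded_linear[symmetric]
  by (auto intro!: linearI simp: transpose_scalar) (simp add: transpose_def vec_eq_iff)

lemma bounded_linear_trace: "bounded_linear (trace :: real^'n^'n \<Rightarrow> real)"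
  unfolding linear_conv_bounded_linear[symmetric]
  by (auto intro!: linearI simp: trace_add) (simp add: trace_def sum_distrib_left)

lemma transpose_diff: "transpose (A - B) = transpose A - transpose (B :: 'a::ring_1^'n^'m)"
  by (simp add: transpose_def vec_eq_iff)

lemma trace_transpose: "trace (transpose A) = trace (A :: 'a::semiring_1^'n^'n)"
  by (simp add: trace_def transpose_def)

lemma trace_scaleR: "trace (c *\<^sub>R A) = c * trace (A :: real^'n^'n)"
  by (simp add: trace_def sum_distrib_left)

lemma trace_transpose_mult: "trace (transpose A ** B) = A \<bullet> (B :: real^'n^'m)"
  by (simp add: trace_def inner_vec_def matrix_matrix_mult_def transpose_def, subst sum.swap, simp)

lemma has_real_derivative_trace:
  fixes F :: "real \<Rightarrow> real^'n^'n"
  assumes "(F has_vector_derivative F') (at t)"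
  shows "((\<lambda>s. trace (F s)) has_real_derivative trace F') (at t)"
  using bounded_linear.has_vector_derivative[OF bounded_linear_trace assms]
  by (simp add: has_real_derivative_iff_has_vector_derivative)

lemma orthogonal_if_skew_flow:
  fixes R W :: "real \<Rightarrow> real^'n^'n"
  assumes R0: "transpose (R 0) ** R 0 = mat 1"
    and W: "\<And>s. transpose (W s) = - W s"
    and dR: "\<And>s. (R has_vector_derivative (R s ** W s)) (at s)"
  shows "transpose (R t) ** R t = mat 1"
proof -
  define D where "D s = transpose (R s) ** R s - mat 1" for s
  have D_sym: "transpose (D s) = D s" for s
    unfolding D_def by (simp add: transpose_diff matrix_transpose_mul)
  have dD: "(D has_vector_derivative (D s ** W s - W s ** D s)) (at s)" for s
  proof -
    have dRT: "((\<lambda>s. transpose (R s)) has_vector_derivative transpose (R s ** W s)) (at s)"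
      by (rule bounded_linear.has_vector_derivative[OF bounded_linear_transpose dR])
    have "(D has_vector_derivative
        (transpose (R s) ** (R s ** W s) + transpose (R s ** W s) ** R s - 0)) (at s)"
      unfolding D_def[abs_def]
      by (intro has_vector_derivative_diff matrix_mult.has_vector_derivative dRT dR
          has_vector_derivative_const)
    then show ?thesis
      by (simp add: D_def matrix_transpose_mul W matrix_mul_assoc matrix_mult.diff_left
          matrix_mult.diff_right matrix_mult.minus_left)
  qed
  \<comment> \<open>The derivative of |D|^2 is 2 tr(D (D W - W D)), which vanishes by cyclicity of the trace.\<close>
  have "((\<lambda>s. D s \<bullet> D s) has_real_derivative 0) (at s)" for s
  proof -
    have "D s \<bullet> (D s ** W s - W s ** D s) = 0"
      using trace_mul_sym[of "D s ** W s" "D s"]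
      by (simp add: trace_transpose_mult[symmetric] D_sym matrix_mul_assoc
          matrix_mult.diff_right trace_sub)
    then show ?thesis
      using bounded_bilinear.has_vector_derivative[OF bounded_bilinear_inner dD[of s] dD[of s]]
      by (simp add: has_real_derivative_iff_has_vector_derivative inner_commute)
  qed
  then have "D t \<bullet> D t = D 0 \<bullet> D 0"
    by (intro DERIV_isconst_all allI)
  then show ?thesis using R0 by (simp add: D_def)
qed

section \<open>The hat map and its inverse\<close>

lemma skew_component:
  "skew x $ i $ j =
    (if i = 1 then (if j = 1 then 0 else if j = 2 then - x$3 else x$2)
     else if i = 2 then (if j = 1 then x$3 else if j = 2 then 0 else - x$1)
     else (if j = 1 then - x$2 else if j = 2 then x$1 else 0))"
proof -
  have "i = 1 \<or> i = 2 \<or> i = 3" "j = 1 \<or> j = 2 \<or> j = 3" using exhaust_3 by auto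
  then show ?thesis unfolding skew_def by (auto simp: vector_def)
qed

lemmas mat3_entries = vec_eq_iff forall_3 sum_3 matrix_matrix_mult_def matrix_vector_mult_def
  transpose_def mat_def skew_component psi_def Emat_def trace_def inner_vec_def cross3_def

lemma norm_eq_1_components: "norm (u :: real^3) = 1 \<Longrightarrow> u$1^2 + u$2^2 + u$3^2 = 1"
  by (simp add: norm_eq_1 inner_vec_def sum_3 power2_eq_square)

lemma symmetric_matrix_component: "transpose A = A \<Longrightarrow> A$j$i = A$i$j"
  by (metis transpose_def vec_lambda_beta)

lemma skew_mult_vector: "skew x *v y = cross3 x y"
  by (simp add: mat3_entries)

lemma psi_skew [simp]: "psi (skew x) = x"
  by (simp add: mat3_entries)

lemma skew_psi:
  assumes "transpose W = - W"
  shows "skew (psi W) = W"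
proof -
  have h: "W$j$i = - W$i$j" for i j
  proof -
    have "transpose W $ i $ j = (- W) $ i $ j"
      using assms by simp
    then show ?thesis
      by (simp add: transpose_def)
  qed
  have d: "W$i$i = 0" for i
    using h[of i i] by simp
  show ?thesis
    using h[of 1 2] h[of 1 3] h[of 2 3] d[of 1] d[of 2] d[of 3]
    by (simp add: mat3_entries field_simps)
qed

lemma transpose_skew: "transpose (skew x) = - skew x"
  by (simp add: mat3_entries)

lemma skew_zero [simp]: "skew 0 = 0"
  by (simp add: mat3_entries)

lemma skew_eq_0_iff [simp]: "skew x = 0 \<longleftrightarrow> x = 0"
  by (metis psi_skew skew_zero)

lemma psi_add: "psi (B + C) = psi B + psi C"
  by (simp add: mat3_entries algebra_simps)

lemma psi_scaleR: "psi (c *\<^sub>R B) = c *\<^sub>R psi B"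
  by (simp add: mat3_entries algebra_simps)

lemma skew_add: "skew (x + y) = skew x + skew y"
  by (simp add: mat3_entries)

lemma skew_scaleR: "skew (c *\<^sub>R x) = c *\<^sub>R skew x"
  by (simp add: mat3_entries)

lemma bounded_linear_psi: "bounded_linear psi"
  unfolding linear_conv_bounded_linear[symmetric]
  by (auto intro!: linearI simp: psi_add psi_scaleR)

lemma psi_eq_0_iff: "psi B = 0 \<longleftrightarrow> transpose B = B"
proof
  assume "transpose B = B"
  from symmetric_matrix_component[OF this] show "psi B = 0"
    by (simp add: psi_def vec_eq_iff forall_3)
qed (simp add: mat3_entries algebra_simps)

lemma skew_psi_eq_antisym_part: "2 *\<^sub>R skew (psi B) = B - transpose B"
  by (simp add: mat3_entries field_simps)

lemma psi_mult_skew: "psi (B ** skew z) = Emat B *v z"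
  by (simp add: mat3_entries field_simps)

lemma trace_mult_skew: "trace (B ** skew x) = - 2 * (psi B \<bullet> x)"
  by (simp add: mat3_entries field_simps)

lemma inner_skew_skew: "skew a \<bullet> skew b = 2 * (a \<bullet> b)"
  by (simp add: mat3_entries algebra_simps)

lemma cross3_cross3: "cross3 a (cross3 b c) = (a \<bullet> c) *\<^sub>R b - (a \<bullet> b) *\<^sub>R c"
  by (simp add: mat3_entries algebra_simps)

section \<open>Rotations about an axis\<close>

lemma mem_SO3_iff: "R \<in> SO3 \<longleftrightarrow> rotation_matrix R"
  by (simp add: SO3_def rotation_matrix_def orthogonal_matrix)

lemma skew_conj_rotation:
  assumes Q: "rotation_matrix Q"
  shows "Q ** skew x ** transpose Q = skew (Q *v x)"
proof -
  have QQ: "Q ** transpose Q = mat 1"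
    using Q by (simp add: rotation_matrix_def orthogonal_matrix_def)
  show ?thesis
  proof (subst matrix_eq, intro allI)
    fix y
    have "(Q ** skew x ** transpose Q) *v y = Q *v cross3 x (transpose Q *v y)"
      by (simp add: matrix_vector_mul_assoc[symmetric] skew_mult_vector)
    also have "\<dots> = cross3 (Q *v x) (Q *v (transpose Q *v y))"
      using cross_rotation_matrix[OF Q] by simp
    also have "Q *v (transpose Q *v y) = y"
      by (simp add: matrix_vector_mul_assoc QQ del: transpose_matrix_vector)
    finally show "(Q ** skew x ** transpose Q) *v y = skew (Q *v x) *v y"
      by (simp add: skew_mult_vector)
  qed
qed

lemma rotation_mult_skew:
  assumes Q: "rotation_matrix Q"
  shows "Q ** skew (transpose Q *v x) = skew x ** Q"
proof -
  have QQ: "transpose Q ** Q = mat 1" "Q ** transpose Q = mat 1"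
    using Q by (simp_all add: rotation_matrix_def orthogonal_matrix_def)
  have "Q ** skew (transpose Q *v x) ** transpose Q = skew x"
    using skew_conj_rotation[OF Q] by (simp add: matrix_vector_mul_assoc QQ del: transpose_matrix_vector)
  then have "Q ** skew (transpose Q *v x) ** (transpose Q ** Q) = skew x ** Q"
    by (simp add: matrix_mul_assoc)
  then show ?thesis by (simp add: QQ)
qed

lemma psi_conj_rotation:
  assumes Q: "rotation_matrix Q"
  shows "psi (Q ** B ** transpose Q) = Q *v psi B"
proof -
  have "2 *\<^sub>R skew (psi (Q ** B ** transpose Q)) = Q ** (B - transpose B) ** transpose Q"
    by (simp add: skew_psi_eq_antisym_part matrix_transpose_mul matrix_mul_assoc
        matrix_mult.diff_left matrix_mult.diff_right)
  also have "\<dots> = 2 *\<^sub>R skew (Q *v psi B)"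
    by (simp add: skew_psi_eq_antisym_part[symmetric] skew_conj_rotation[OF Q]
        matrix_mult.scaleR_left matrix_mult.scaleR_right)
  finally show ?thesis
    by (metis psi_skew scaleR_cancel_left zero_neq_numeral)
qed

lemma skew_cube: "norm u = 1 \<Longrightarrow> skew u ** skew u ** skew u = - skew u"
  by (drule norm_eq_1_components, simp add: mat3_entries) algebra

lemma Ra_orthogonal:
  assumes "norm u = 1"
  shows "transpose (Ra t u) ** Ra t u = mat 1"
proof -
  have u: "u$1^2 + u$2^2 + u$3^2 = 1" and t: "sin t ^ 2 + cos t ^ 2 = 1"
    using norm_eq_1_components[OF assms] by simp_all
  show ?thesis
    apply (simp add: Ra_def mat3_entries)
    using u t by algebra
qed

lemma det_Ra:
  assumes "norm u = 1"
  shows "det (Ra t u) = 1"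
proof -
  have u: "u$1^2 + u$2^2 + u$3^2 = 1" and t: "sin t ^ 2 + cos t ^ 2 = 1"
    using norm_eq_1_components[OF assms] by simp_all
  show ?thesis
    apply (simp add: Ra_def det_3 matrix_matrix_mult_def sum_3 skew_component mat_def)
    using u t by algebra
qed

lemma rotation_matrix_Ra: "norm u = 1 \<Longrightarrow> rotation_matrix (Ra t u)"
  by (simp add: rotation_matrix_def orthogonal_matrix Ra_orthogonal det_Ra)

lemma Ra_0 [simp]: "Ra 0 u = mat 1"
  by (simp add: Ra_def)

lemma Ra_mult_axis: "Ra t u *v u = u"
  by (simp add: Ra_def mat3_entries algebra_simps)

lemma Ra_pi_mult_vector:
  assumes "norm w = 1"
  shows "Ra pi w *v x = (2 * (w \<bullet> x)) *\<^sub>R w - x"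
proof -
  have "Ra pi w *v x = x + 2 *\<^sub>R cross3 w (cross3 w x)"
    by (simp add: Ra_def matrix_vector_mult_add_rdistrib matrix_vector_mul_assoc[symmetric]
        skew_mult_vector scaleR_matrix_vector_assoc[symmetric])
  also have "\<dots> = (2 * (w \<bullet> x)) *\<^sub>R w - x"
    using assms by (simp add: cross3_cross3 norm_eq_1 algebra_simps scaleR_2)
  finally show ?thesis .
qed

lemma transpose_Ra_pi: "transpose (Ra pi w) = Ra pi w"
  by (simp add: Ra_def mat3_entries algebra_simps)

lemma Ra_has_vector_derivative:
  assumes u: "norm u = 1"
  shows "((\<lambda>t. Ra t u) has_vector_derivative (Ra t u ** skew u)) (at t)"
proof -
  let ?K = "skew u"
  have "((\<lambda>t. mat 1 + sin t *\<^sub>R ?K + (1 - cos t) *\<^sub>R (?K ** ?K)) has_vector_derivative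
      (cos t *\<^sub>R ?K + sin t *\<^sub>R (?K ** ?K))) (at t)"
    by (auto intro!: derivative_eq_intros)
  moreover have "Ra t u ** ?K = ?K + sin t *\<^sub>R (?K ** ?K) + (1 - cos t) *\<^sub>R (?K ** ?K ** ?K)"
    by (simp add: Ra_def matrix_mult_add_rdistrib scalar_matrix_assoc[symmetric] matrix_mul_assoc)
  then have "Ra t u ** ?K = cos t *\<^sub>R ?K + sin t *\<^sub>R (?K ** ?K)"
    using skew_cube[OF u] by (simp add: algebra_simps)
  ultimately show ?thesis by (simp add: Ra_def)
qed

lemma has_vector_derivative_Ra_comp:
  assumes "norm u = 1" and "(\<theta> has_real_derivative v) (at t)"
  shows "((\<lambda>s. Ra (\<theta> s) u) has_vector_derivative v *\<^sub>R (Ra (\<theta> t) u ** skew u)) (at t)"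
  using vector_diff_chain_at[OF assms(2)[unfolded has_real_derivative_iff_has_vector_derivative]
      Ra_has_vector_derivative[OF assms(1)]]
  by (simp add: o_def)

section \<open>Gradients of the potential\<close>

lemma gradR_eqI:
  assumes R: "transpose R ** R = mat 1"
    and df: "\<And>w. ((\<lambda>s. f (R + s *\<^sub>R (R ** skew w))) has_real_derivative 2 * (g \<bullet> w)) (at 0)"
  shows "gradR f R = R ** skew g"
proof -
  let ?P = "\<lambda>G. (\<exists>\<Omega>G. is_skew \<Omega>G \<and> G = R ** \<Omega>G) \<and>
      (\<forall>\<Omega>. is_skew \<Omega> \<longrightarrow>
         ((\<lambda>s. f (R + s *\<^sub>R (R ** \<Omega>))) has_real_derivative frob (transpose R ** G) \<Omega>) (at 0))"
  have frob_skew: "frob (transpose R ** (R ** skew a)) (skew b) = 2 * (a \<bullet> b)" for a b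
    by (simp add: frob_def matrix_mul_assoc R trace_transpose_mult inner_skew_skew)
  have "?P (R ** skew g)"
  proof (intro conjI allI impI)
    show "\<exists>\<Omega>G. is_skew \<Omega>G \<and> R ** skew g = R ** \<Omega>G"
      using transpose_skew unfolding is_skew_def by blast
  next
    fix \<Omega> assume "is_skew \<Omega>"
    then have \<Omega>: "skew (psi \<Omega>) = \<Omega>"
      unfolding is_skew_def by (rule skew_psi)
    show "((\<lambda>s. f (R + s *\<^sub>R (R ** \<Omega>))) has_real_derivative
        frob (transpose R ** (R ** skew g)) \<Omega>) (at 0)"
      using df[of "psi \<Omega>"] frob_skew[of g "psi \<Omega>"] by (simp add: \<Omega>)
  qed
  moreover have "G = R ** skew g" if G_grad: "?P G" for G
  proof -
    from G_grad obtain \<Omega>G where "is_skew \<Omega>G" "G = R ** \<Omega>G"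
      by blast
    then have G: "G = R ** skew (psi \<Omega>G)"
      by (simp add: is_skew_def skew_psi)
    have "psi \<Omega>G \<bullet> w = g \<bullet> w" for w
    proof -
      have "((\<lambda>s. f (R + s *\<^sub>R (R ** skew w))) has_real_derivative
          frob (transpose R ** G) (skew w)) (at 0)"
        using G_grad transpose_skew unfolding is_skew_def by blast
      then have "frob (transpose R ** G) (skew w) = 2 * (g \<bullet> w)"
        by (rule DERIV_unique[OF _ df[of w]])
      then show ?thesis
        by (simp add: G frob_skew)
    qed
    then have "psi \<Omega>G = g"
      using vector_eq_rdot by blast
    then show ?thesis
      using G by simp
  qed
  ultimately show ?thesis
    unfolding gradR_def by (rule the_equality)
qed

lemma Upot_tangent_line:
  "Upot A \<gamma> u (R + s *\<^sub>R (R ** W)) \<theta> = Upot A \<gamma> u R \<theta> - s * trace (Ra \<theta> u ** A ** R ** W)"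
proof -
  have "trace (A ** (R ** W ** Ra \<theta> u)) = trace (Ra \<theta> u ** A ** R ** W)"
    using trace_mul_sym[of "A ** R ** W" "Ra \<theta> u"] by (simp add: matrix_mul_assoc)
  then show ?thesis
    by (simp add: Upot_def Tmap_def matrix_mult_add_rdistrib matrix_add_ldistrib
        matrix_mult.diff_right matrix_mult.scaleR_left matrix_mult.scaleR_right
        trace_sub trace_add trace_scaleR matrix_mul_assoc)
qed

lemma gradR_Upot:
  assumes R: "transpose R ** R = mat 1" and u: "norm u = 1"
  shows "gradR (\<lambda>X. Upot A \<gamma> u X \<theta>) R = R ** skew (Ra \<theta> u *v psi (A ** Tmap u R \<theta>))"
proof (rule gradR_eqI[OF R])
  fix w
  let ?Q = "Ra \<theta> u"
  have "?Q ** A ** R = ?Q ** (A ** Tmap u R \<theta>) ** transpose ?Q"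
    using rotation_matrix_Ra[OF u]
    by (simp add: Tmap_def matrix_mul_assoc[symmetric] rotation_matrix_def orthogonal_matrix_def)
  then have gradient: "- trace (?Q ** A ** R ** skew w) = 2 * ((?Q *v psi (A ** Tmap u R \<theta>)) \<bullet> w)"
    by (simp only: trace_mult_skew psi_conj_rotation[OF rotation_matrix_Ra[OF u]])
  have "((\<lambda>s. Upot A \<gamma> u (R + s *\<^sub>R (R ** skew w)) \<theta>) has_real_derivative
      - trace (?Q ** A ** R ** skew w)) (at 0)"
    unfolding Upot_tangent_line by (auto intro!: derivative_eq_intros)
  then show "((\<lambda>s. Upot A \<gamma> u (R + s *\<^sub>R (R ** skew w)) \<theta>) has_real_derivative
      2 * ((?Q *v psi (A ** Tmap u R \<theta>)) \<bullet> w)) (at 0)"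
    unfolding gradient .
qed

lemma psi_gradR_Upot:
  assumes "transpose R ** R = mat 1" and "norm u = 1"
  shows "psi (transpose R ** gradR (\<lambda>X. Upot A \<gamma> u X \<theta>) R) = Ra \<theta> u *v psi (A ** Tmap u R \<theta>)"
  using assms by (simp add: gradR_Upot matrix_mul_assoc)

lemma gradR_Upot_eq_0_iff:
  assumes R: "transpose R ** R = mat 1" and u: "norm u = 1"
  shows "gradR (\<lambda>X. Upot A \<gamma> u X \<theta>) R = 0 \<longleftrightarrow> psi (A ** Tmap u R \<theta>) = 0"
proof -
  let ?Q = "Ra \<theta> u" and ?x = "psi (A ** Tmap u R \<theta>)"
  have "R ** skew y = 0 \<longleftrightarrow> y = 0" for y
  proof
    assume "R ** skew y = 0"
    then have "(transpose R ** R) ** skew y = 0"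
      by (simp add: matrix_mul_assoc[symmetric])
    then show "y = 0"
      by (simp add: R)
  qed simp
  then have "gradR (\<lambda>X. Upot A \<gamma> u X \<theta>) R = 0 \<longleftrightarrow> ?Q *v ?x = 0"
    by (simp add: gradR_Upot[OF R u])
  also have "\<dots> \<longleftrightarrow> ?x = 0"
  proof
    assume "?Q *v ?x = 0"
    then have "(transpose ?Q ** ?Q) *v ?x = 0"
      by (simp add: matrix_vector_mul_assoc[symmetric] del: transpose_matrix_vector)
    then show "?x = 0"
      by (simp add: Ra_orthogonal[OF u])
  qed simp
  finally show ?thesis .
qed

lemma Upot_has_real_derivative_angle:
  assumes u: "norm u = 1"
  shows "((\<lambda>t. Upot A \<gamma> u R t) has_real_derivative \<gamma> * \<theta> + 2 * (u \<bullet> psi (A ** Tmap u R \<theta>)))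
    (at \<theta>)"
proof -
  have "((\<lambda>t. A ** (mat 1 - R ** Ra t u)) has_vector_derivative
      A ** (0 - (R ** (Ra \<theta> u ** skew u) + 0 ** Ra \<theta> u)) + 0 ** (mat 1 - R ** Ra \<theta> u)) (at \<theta>)"
    by (intro matrix_mult.has_vector_derivative has_vector_derivative_diff
        has_vector_derivative_const Ra_has_vector_derivative u)
  from has_real_derivative_trace[OF this]
  have "((\<lambda>t. trace (A ** (mat 1 - R ** Ra t u))) has_real_derivative
      - trace (A ** R ** Ra \<theta> u ** skew u)) (at \<theta>)"
    by (simp add: matrix_mul_assoc trace_def sum_negf matrix_mult.minus_right)
  then have "((\<lambda>t. trace (A ** (mat 1 - R ** Ra t u))) has_real_derivative
      2 * (u \<bullet> psi (A ** Tmap u R \<theta>))) (at \<theta>)"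
    by (simp add: Tmap_def matrix_mul_assoc trace_mult_skew inner_commute)
  moreover have "((\<lambda>t. \<gamma> / 2 * t\<^sup>2) has_real_derivative \<gamma> * \<theta>) (at \<theta>)"
    by (auto intro!: derivative_eq_intros)
  ultimately have "((\<lambda>t. trace (A ** (mat 1 - R ** Ra t u)) + \<gamma> / 2 * t\<^sup>2) has_real_derivative
      2 * (u \<bullet> psi (A ** Tmap u R \<theta>)) + \<gamma> * \<theta>) (at \<theta>)"
    by (rule DERIV_add)
  then show ?thesis
    unfolding Upot_def Tmap_def by (simp only: add.commute)
qed

lemma gradTheta_Upot:
  "norm u = 1 \<Longrightarrow> gradTheta A \<gamma> u R \<theta> = \<gamma> * \<theta> + 2 * (u \<bullet> psi (A ** Tmap u R \<theta>))"
  unfolding gradTheta_def by (rule DERIV_imp_deriv[OF Upot_has_real_derivative_angle])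

section \<open>Critical points\<close>

lemma Emat_quadratic_form:
  "2 * (r \<bullet> (Emat A *v r)) = (\<Sum>i\<in>UNIV. cross3 r (axis i 1) \<bullet> (A *v cross3 r (axis i 1)))"
  by (simp add: mat3_entries axis_def algebra_simps)

lemma inner_Emat_mult_pos:
  assumes posA: "\<forall>x. x \<noteq> 0 \<longrightarrow> x \<bullet> (A *v x) > 0" and r: "r \<noteq> 0"
  shows "r \<bullet> (Emat A *v r) > 0"
proof -
  let ?c = "\<lambda>i. cross3 r (axis i 1)"
  obtain i where "?c i \<noteq> 0"
    using cross_basis_nonzero[OF r] by blast
  have "(\<Sum>j\<in>UNIV. ?c j \<bullet> (A *v ?c j)) > 0"
  proof (rule sum_pos2[where i = i])
    show "0 < ?c i \<bullet> (A *v ?c i)"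
      using posA \<open>?c i \<noteq> 0\<close> by blast
    show "0 \<le> ?c j \<bullet> (A *v ?c j)" for j
      using posA by (cases "?c j = 0") (auto intro: less_imp_le)
  qed simp_all
  then show ?thesis
    using Emat_quadratic_form[of r A] by simp
qed

lemma symmetric_if_psi_mult_eq_0:
  assumes symA: "transpose A = A" and posA: "\<forall>x. x \<noteq> 0 \<longrightarrow> x \<bullet> (A *v x) > 0"
    and R: "transpose R ** R = mat 1" and crit: "psi (A ** R) = 0"
  shows "transpose R = R"
proof -
  have R': "R ** transpose R = mat 1"
    using R matrix_left_right_inverse by blast
  define r where "r = psi R"
  define S where "S = (1/2) *\<^sub>R (R + transpose R)"
  define K where "K = (1/2) *\<^sub>R (R - transpose R)"
  have "K = skew r"
    unfolding K_def r_def skew_psi_eq_antisym_part[symmetric] by simp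
  have RSK: "R = S + K"
    unfolding S_def K_def by (simp add: algebra_simps scaleR_2[symmetric])
  have S_sym: "transpose S = S"
    unfolding S_def by (simp add: transpose_scalar transpose_def vec_eq_iff add.commute)
  \<comment> \<open>S and K commute because R is normal; transposing then gives tr(A S K) = - tr(A S K).\<close>
  have "(R + transpose R) ** (R - transpose R) = R ** R - transpose R ** transpose R"
    by (simp add: matrix_mult.add_left matrix_mult.diff_right R R')
  moreover have "(R - transpose R) ** (R + transpose R) = R ** R - transpose R ** transpose R"
    by (simp add: matrix_mult.diff_left matrix_mult.add_right R R')
  ultimately have SK: "S ** K = K ** S"
    unfolding S_def K_def
    by (simp add: matrix_mult.scaleR_left matrix_mult.scaleR_right)
  have "trace (A ** S ** K) = trace (transpose (A ** S ** K))"
    by (simp add: trace_transpose)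
  also have "transpose (A ** S ** K) = - (K ** S ** A)"
    by (simp add: matrix_transpose_mul \<open>K = skew r\<close> transpose_skew S_sym symA matrix_mul_assoc
        matrix_mult.minus_left)
  also have "trace (- (K ** S ** A)) = - trace (S ** K ** A)"
    by (simp add: SK trace_def sum_negf)
  also have "trace (S ** K ** A) = trace (A ** S ** K)"
    using trace_mul_sym[of "S ** K" A] by (simp add: matrix_mul_assoc)
  finally have "trace (A ** S ** K) = 0"
    by simp
  then have "psi (A ** S) \<bullet> r = 0"
    using trace_mult_skew[of "A ** S" r] \<open>K = skew r\<close> by simp
  moreover have "psi (A ** R) = psi (A ** S) + Emat A *v r"
    by (simp add: RSK matrix_add_ldistrib psi_add psi_mult_skew \<open>K = skew r\<close>)
  ultimately have "r \<bullet> (Emat A *v r) = r \<bullet> psi (A ** R)"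
    by (simp add: inner_add_right inner_commute)
  then have "r \<bullet> (Emat A *v r) = 0"
    using crit by simp
  then have "r = 0"
    using inner_Emat_mult_pos[OF posA] by force
  then show ?thesis
    using skew_psi_eq_antisym_part[of R] r_def by simp
qed

lemma matrix_eq_on_orthogonal_frame:
  fixes M N :: "real^3^3"
  assumes p: "p \<noteq> 0" and q: "q \<noteq> 0" and pq: "p \<bullet> q = 0"
    and "M *v p = N *v p" "M *v q = N *v q" "M *v cross3 p q = N *v cross3 p q"
  shows "M = N"
proof -
  let ?m = "cross3 p q"
  have "(norm ?m)\<^sup>2 = (norm p * norm q)\<^sup>2"
    using norm_cross_dot[of p q] pq by simp
  then have m: "?m \<noteq> 0"
    using p q by auto
  have pm: "p \<bullet> ?m = 0" and qm: "q \<bullet> ?m = 0"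
    using dot_cross_self by auto
  let ?B = "{p, q, ?m}"
  have "pairwise orthogonal ?B"
    using pq pm qm by (auto simp: pairwise_def orthogonal_def inner_commute)
  then have "independent ?B"
    using p q m by (intro pairwise_orthogonal_independent) auto
  moreover have "p \<noteq> q" "p \<noteq> ?m" "q \<noteq> ?m"
    using p q pq pm qm by (metis inner_eq_zero_iff)+
  then have "card ?B = 3"
    by simp
  ultimately have "UNIV \<subseteq> span ?B"
    by (intro card_ge_dim_independent) auto
  moreover have "(M - N) *v x = 0" if "x \<in> ?B" for x
    using that assms by (auto simp: matrix_vector_mult_diff_rdistrib)
  ultimately have "(M - N) *v x = 0" for x
    using linear_eq_0_on_span[of "(*v) (M - N)" ?B] by auto
  then show ?thesis
    by (simp add: matrix_eq matrix_vector_mult_diff_rdistrib)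
qed

lemma symmetric_rotation_eq_Ra_pi:
  assumes rot: "rotation_matrix R" and sym: "transpose R = R" and "R \<noteq> mat 1"
  obtains w where "norm w = 1" "R = Ra pi w"
proof -
  have RR: "R ** R = mat 1"
    using rot sym by (simp add: rotation_matrix_def orthogonal_matrix)
  \<comment> \<open>As R R = I, the columns of I + R and I - R are eigenvectors for 1 and -1.\<close>
  have "mat 1 + R \<noteq> 0"
  proof
    assume "mat 1 + R = 0"
    then have "R = - mat 1"
      by (simp add: eq_neg_iff_add_eq_0 add.commute)
    then show False
      using rot by (simp add: rotation_matrix_def det_3 mat_def)
  qed
  then obtain x where "(mat 1 + R) *v x \<noteq> 0"
    by (metis matrix_eq matrix_vector_mult_0)
  define p where "p = (mat 1 + R) *v x"
  have p: "p \<noteq> 0" "R *v p = p"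
    using \<open>(mat 1 + R) *v x \<noteq> 0\<close>
    by (simp_all add: p_def matrix_vector_mul_assoc matrix_add_ldistrib RR add.commute)
  from \<open>R \<noteq> mat 1\<close> obtain y where "(mat 1 - R) *v y \<noteq> 0"
    by (metis matrix_eq matrix_vector_mult_0 eq_iff_diff_eq_0)
  define q where "q = (mat 1 - R) *v y"
  have q: "q \<noteq> 0" "R *v q = - q"
    using \<open>(mat 1 - R) *v y \<noteq> 0\<close>
    by (simp_all add: q_def matrix_vector_mult_diff_rdistrib matrix_vector_mult_diff_distrib
        matrix_vector_mul_assoc RR)
  have "(R *v p) \<bullet> q = p \<bullet> (R *v q)"
    by (metis sym dot_lmul_matrix inner_commute transpose_matrix_vector)
  then have pq: "p \<bullet> q = 0"
    using p q by simp
  define w where "w = (1 / norm p) *\<^sub>R p"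
  have w: "norm w = 1"
    using p by (simp add: w_def)
  have "R = Ra pi w"
  proof (rule matrix_eq_on_orthogonal_frame[OF p(1) q(1) pq])
    have "w \<bullet> p = norm p"
      by (simp add: w_def dot_square_norm power2_eq_square)
    then have "Ra pi w *v p = (2 * norm p) *\<^sub>R w - p"
      by (simp add: Ra_pi_mult_vector[OF w])
    also have "(2 * norm p) *\<^sub>R w = 2 *\<^sub>R p"
      using p by (simp add: w_def)
    finally show "R *v p = Ra pi w *v p"
      using p by (simp add: scaleR_2)
    have "w \<bullet> q = 0"
      using pq by (simp add: w_def)
    then show "R *v q = Ra pi w *v q"
      using q by (simp add: Ra_pi_mult_vector[OF w])
    have "w \<bullet> cross3 p q = 0"
      by (simp add: w_def dot_cross_self)
    then show "R *v cross3 p q = Ra pi w *v cross3 p q"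
      using p q cross_rotation_matrix[OF rot, of p q] by (simp add: Ra_pi_mult_vector[OF w])
  qed
  then show ?thesis
    using w that by blast
qed

lemma psi_mult_eq_0_iff_commute:
  assumes "transpose A = A" and "transpose R = R"
  shows "psi (A ** R) = 0 \<longleftrightarrow> R ** A = A ** R"
  using assms by (auto simp: psi_eq_0_iff matrix_transpose_mul)

lemma Ra_pi_commute_iff_eigvec:
  assumes symA: "transpose A = A" and w: "norm w = 1"
  shows "Ra pi w ** A = A ** Ra pi w \<longleftrightarrow> (\<exists>c. A *v w = c *\<^sub>R w)"
proof
  assume "Ra pi w ** A = A ** Ra pi w"
  then have "Ra pi w *v (A *v w) = A *v w"
    by (metis matrix_vector_mul_assoc Ra_mult_axis)
  then have "(2 * (w \<bullet> (A *v w))) *\<^sub>R w = 2 *\<^sub>R (A *v w)"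
    by (simp add: Ra_pi_mult_vector[OF w] scaleR_2 algebra_simps)
  then have "A *v w = (w \<bullet> (A *v w)) *\<^sub>R w"
    by (metis scaleR_scaleR scaleR_cancel_left zero_neq_numeral)
  then show "\<exists>c. A *v w = c *\<^sub>R w" ..
next
  assume "\<exists>c. A *v w = c *\<^sub>R w"
  then obtain c where c: "A *v w = c *\<^sub>R w" ..
  show "Ra pi w ** A = A ** Ra pi w"
  proof (subst matrix_eq, intro allI)
    fix x
    have "w \<bullet> (A *v x) = c * (w \<bullet> x)"
      by (metis symA c dot_lmul_matrix transpose_matrix_vector inner_commute inner_scaleR_right)
    then show "(Ra pi w ** A) *v x = (A ** Ra pi w) *v x"
      by (simp add: matrix_vector_mul_assoc[symmetric] Ra_pi_mult_vector[OF w] c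
          matrix_vector_mult_diff_distrib matrix_vector_mult_scaleR)
  qed
qed

lemma mem_critV_iff:
  assumes symA: "transpose A = A" and posA: "\<forall>x. x \<noteq> 0 \<longrightarrow> x \<bullet> (A *v x) > 0"
  shows "R \<in> critV A \<longleftrightarrow> R \<in> SO3 \<and> psi (A ** R) = 0"
proof
  assume "R \<in> critV A"
  then consider "R = mat 1" | w where "norm w = 1" "\<exists>c. A *v w = c *\<^sub>R w" "R = Ra pi w"
    unfolding critV_def unit_eigvecs_def by blast
  then show "R \<in> SO3 \<and> psi (A ** R) = 0"
  proof cases
    case 1
    then show ?thesis
      using symA by (simp add: mem_SO3_iff rotation_matrix_def orthogonal_matrix det_I psi_eq_0_iff)
  next
    case 2
    have "transpose R = R"
      by (simp add: \<open>R = Ra pi w\<close> transpose_Ra_pi)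
    then show ?thesis
      using 2 symA by (simp add: mem_SO3_iff rotation_matrix_Ra psi_mult_eq_0_iff_commute
          Ra_pi_commute_iff_eigvec)
  qed
next
  assume "R \<in> SO3 \<and> psi (A ** R) = 0"
  then have rot: "rotation_matrix R" and crit: "psi (A ** R) = 0"
    by (simp_all add: mem_SO3_iff)
  have sym: "transpose R = R"
    using rot crit symmetric_if_psi_mult_eq_0[OF symA posA]
    by (simp add: rotation_matrix_def orthogonal_matrix)
  show "R \<in> critV A"
  proof (cases "R = mat 1")
    case False
    then obtain w where w: "norm w = 1" "R = Ra pi w"
      using symmetric_rotation_eq_Ra_pi[OF rot sym] by blast
    then have "w \<in> unit_eigvecs A"
      using crit sym symA
      by (simp add: unit_eigvecs_def psi_mult_eq_0_iff_commute Ra_pi_commute_iff_eigvec)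
    then show ?thesis
      using w by (auto simp: critV_def)
  qed (simp add: critV_def)
qed

lemma critU_eq:
  assumes symA: "transpose A = A" and posA: "\<forall>x. x \<noteq> 0 \<longrightarrow> x \<bullet> (A *v x) > 0"
    and u: "norm u = 1" and \<gamma>: "\<gamma> > 0"
  shows "critU A \<gamma> u = critV A \<times> {0}"
proof -
  have "(R, \<theta>) \<in> critU A \<gamma> u \<longleftrightarrow> (R, \<theta>) \<in> critV A \<times> {0}" for R \<theta>
  proof -
    have "(R, \<theta>) \<in> critU A \<gamma> u \<longleftrightarrow>
        R \<in> SO3 \<and> psi (A ** Tmap u R \<theta>) = 0 \<and> \<gamma> * \<theta> + 2 * (u \<bullet> psi (A ** Tmap u R \<theta>)) = 0"
      by (auto simp: critU_def SO3_def gradR_Upot_eq_0_iff[OF _ u] gradTheta_Upot[OF u])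
    also have "\<dots> \<longleftrightarrow> R \<in> SO3 \<and> psi (A ** R) = 0 \<and> \<theta> = 0"
      using \<gamma> by (auto simp: Tmap_def)
    also have "\<dots> \<longleftrightarrow> (R, \<theta>) \<in> critV A \<times> {0}"
      by (auto simp: mem_critV_iff[OF symA posA])
    finally show ?thesis .
  qed
  then show ?thesis
    by (simp add: set_eq_iff)
qed

section \<open>Derivatives along trajectories\<close>

lemma Tmap_has_vector_derivative:
  assumes u: "norm u = 1"
    and dR: "(R has_vector_derivative (R t ** skew w)) (at t)"
    and d\<theta>: "(\<theta> has_real_derivative v) (at t)"
  shows "((\<lambda>s. Tmap u (R s) (\<theta> s)) has_vector_derivative
      (Tmap u (R t) (\<theta> t) ** skew (transpose (Ra (\<theta> t) u) *v w + v *\<^sub>R u))) (at t)"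
proof -
  let ?Q = "Ra (\<theta> t) u"
  have "((\<lambda>s. R s ** Ra (\<theta> s) u) has_vector_derivative
      (R t ** (v *\<^sub>R (?Q ** skew u)) + (R t ** skew w) ** ?Q)) (at t)"
    by (rule matrix_mult.has_vector_derivative[OF dR has_vector_derivative_Ra_comp[OF u d\<theta>]])
  moreover have "R t ** ?Q ** skew (transpose ?Q *v w + v *\<^sub>R u)
      = R t ** (?Q ** skew (transpose ?Q *v w)) + v *\<^sub>R (R t ** ?Q ** skew u)"
    by (simp add: skew_add skew_scaleR matrix_add_ldistrib matrix_mul_assoc matrix_mult.scaleR_right)
  moreover have "\<dots> = R t ** (v *\<^sub>R (?Q ** skew u)) + (R t ** skew w) ** ?Q"
    by (simp add: rotation_mult_skew[OF rotation_matrix_Ra[OF u]] matrix_mul_assoc add.commute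
        matrix_mult.scaleR_right del: transpose_matrix_vector)
  ultimately show ?thesis
    by (simp add: Tmap_def)
qed

lemma psi_gradR_Upot_has_vector_derivative:
  assumes u: "norm u = 1" and R0: "R 0 \<in> SO3"
    and dR: "\<And>s. (R has_vector_derivative (R s ** skew (\<omega> s))) (at s)"
    and d\<theta>: "\<And>s. (\<theta> has_real_derivative v s) (at s)"
  shows "((\<lambda>s. psi (transpose (R s) ** gradR (\<lambda>X. Upot A \<gamma> u X (\<theta> s)) (R s)))
      has_vector_derivative (DR A u (R t) (\<theta> t) *v \<omega> t + v t *\<^sub>R Dtheta A u (R t) (\<theta> t))) (at t)"
proof -
  let ?T = "\<lambda>s. Tmap u (R s) (\<theta> s)"
  let ?Q = "Ra (\<theta> t) u"
  let ?z = "transpose ?Q *v \<omega> t + v t *\<^sub>R u"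
  let ?E = "Emat (A ** ?T t)"
  let ?p = "psi (A ** ?T t)"
  have "transpose (R s) ** R s = mat 1" for s
    by (rule orthogonal_if_skew_flow[of R "\<lambda>s. skew (\<omega> s)"])
      (use R0 dR in \<open>simp_all add: SO3_def transpose_skew\<close>)
  then have gradient: "(\<lambda>s. psi (transpose (R s) ** gradR (\<lambda>X. Upot A \<gamma> u X (\<theta> s)) (R s)))
      = (\<lambda>s. Ra (\<theta> s) u *v psi (A ** ?T s))"
    by (simp add: psi_gradR_Upot[OF _ u])
  have "((\<lambda>s. A ** ?T s) has_vector_derivative (A ** (?T t ** skew ?z))) (at t)"
    using matrix_mult.has_vector_derivative[OF has_vector_derivative_const
        Tmap_has_vector_derivative[OF u dR d\<theta>]] by simp
  from bounded_linear.has_vector_derivative[OF bounded_linear_psi this]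
  have "((\<lambda>s. psi (A ** ?T s)) has_vector_derivative (?E *v ?z)) (at t)"
    by (simp add: matrix_mul_assoc psi_mult_skew)
  from matrix_vector_mult.has_vector_derivative[OF has_vector_derivative_Ra_comp[OF u d\<theta>] this]
  have "((\<lambda>s. Ra (\<theta> s) u *v psi (A ** ?T s)) has_vector_derivative
      (?Q *v (?E *v ?z) + (v t *\<^sub>R (?Q ** skew u)) *v ?p)) (at t)" .
  \<comment> \<open>The axis is fixed by Ra, so Ra (u \<times> p) = u \<times> Ra p.\<close>
  moreover have "(?Q ** skew u) *v ?p = - (skew (?Q *v ?p) *v u)"
  proof -
    have "(?Q ** skew u) *v ?p = ?Q *v cross3 u ?p"
      by (simp add: matrix_vector_mul_assoc[symmetric] skew_mult_vector)
    also have "\<dots> = cross3 (?Q *v u) (?Q *v ?p)"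
      using cross_rotation_matrix[OF rotation_matrix_Ra[OF u]] by simp
    also have "\<dots> = - cross3 (?Q *v ?p) u"
      by (subst Cross3.cross_skew) (simp add: Ra_mult_axis)
    finally show ?thesis
      by (simp add: skew_mult_vector)
  qed
  moreover have "?Q *v (?E *v ?z) = (?Q ** ?E ** transpose ?Q) *v \<omega> t + v t *\<^sub>R ((?Q ** ?E) *v u)"
    by (simp add: matrix_vector_right_distrib matrix_vector_mul_assoc matrix_vector_mult_scaleR
        matrix_mul_assoc del: transpose_matrix_vector)
  ultimately show ?thesis
    unfolding gradient DR_def Dtheta_def
    by (simp add: scaleR_matrix_vector_assoc[symmetric] algebra_simps del: transpose_matrix_vector)
qed

theorem lemma2:
  fixes A :: "real^3^3" and u :: "real^3" and \<gamma> :: real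
  assumes symA: "transpose A = A"
    and posA: "\<forall>x. x \<noteq> 0 \<longrightarrow> x \<bullet> (A *v x) > 0"
    and u_unit: "norm u = 1"
    and \<gamma>_pos: "\<gamma> > 0"
  shows
    "(\<forall>(Rt :: real \<Rightarrow> real^3^3) (tht :: real \<Rightarrow> real) (\<omega> :: real \<Rightarrow> real^3) (v :: real \<Rightarrow> real) t.
        Rt 0 \<in> SO3 \<and> (\<forall>s. (Rt has_vector_derivative (Rt s ** skew (\<omega> s))) (at s))
        \<and> (\<forall>s. (tht has_real_derivative v s) (at s)) \<longrightarrow>
        ((\<lambda>s. Tmap u (Rt s) (tht s)) has_vector_derivative
            (Tmap u (Rt t) (tht t) ** skew (transpose (Ra (tht t) u) *v \<omega> t + v t *\<^sub>R u))) (at t))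
   \<and> (\<forall>R th. R \<in> SO3 \<longrightarrow>
        psi (transpose R ** gradR (\<lambda>X. Upot A \<gamma> u X th) R) = Ra th u *v psi (A ** Tmap u R th))
   \<and> (\<forall>R th. R \<in> SO3 \<longrightarrow>
        gradTheta A \<gamma> u R th = \<gamma> * th + 2 * (u \<bullet> psi (A ** Tmap u R th)))
   \<and> critU A \<gamma> u = critV A \<times> {0}
   \<and> (mat 1, 0) \<in> critU A \<gamma> u
   \<and> (\<forall>(Rt :: real \<Rightarrow> real^3^3) (tht :: real \<Rightarrow> real) (\<omega> :: real \<Rightarrow> real^3) (v :: real \<Rightarrow> real) t.
        Rt 0 \<in> SO3 \<and> (\<forall>s. (Rt has_vector_derivative (Rt s ** skew (\<omega> s))) (at s))
        \<and> (\<forall>s. (tht has_real_derivative v s) (at s)) \<longrightarrow>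
        ((\<lambda>s. psi (transpose (Rt s) ** gradR (\<lambda>X. Upot A \<gamma> u X (tht s)) (Rt s)))
           has_vector_derivative
            (DR A u (Rt t) (tht t) *v \<omega> t + v t *\<^sub>R Dtheta A u (Rt t) (tht t))) (at t))"
proof -
  have orth: "transpose R ** R = mat 1" if "R \<in> SO3" for R
    using that by (simp add: SO3_def)
  show ?thesis
    using Tmap_has_vector_derivative[OF u_unit] psi_gradR_Upot[OF orth u_unit]
      gradTheta_Upot[OF u_unit] psi_gradR_Upot_has_vector_derivative[OF u_unit]
      critU_eq[OF symA posA u_unit \<gamma>_pos]
    by (auto simp: critV_def)
qed

end
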